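(* Let $\overrightarrow{W}$ be a Morse sequence on a simplicial complex $K$. (1) The map $\widetilde\curlywedge_p:\widehat W[p]\to\overline O[p]$ is a vector space isomorphism whose inverse is the restriction of $\curlywedge_p$ to $\overline O[p]$. (2) The map $\widetilde\curlyvee_p:\widehat W[p]\to\underline O[p]$ is a vector space isomorphism whose inverse is the restriction of $\curlyvee_p$ to $\underline O[p]$.
   Context: A simplicial complex $K$ is a finite collection of non-empty finite sets closed under taking non-empty subsets; $\dim\sigma=|\sigma|-1$, $K^{(p)}$ the set of $p$-simplices. A pair $(\sigma,\tau)$ with $\sigma\subsetneq\tau$ is a free pair for $K$ if $\tau$ is the only simplex other than $\sigma$ containing $\sigma$; $K$ is then an elementary expansion of $K\setminus\{\sigma,\tau\}$. If $\nu$ is a facet (maximal simplex) of $K$, $K$ is an elementary filling of $K\setminus\{\nu\}$. A Morse sequence on $K$ is a sequence $\langle\emptyset=K_0,\dots,K_k=K\rangle$ with each $K_i$ an elementary expansion or filling of $K_{i-1}$; simplices added by fillings are critical; for an expansion $K_i=K_{i-1}\cup\{\sigma,\tau\}$, $\sigma\subset\tau$, $\sigma$ is lower regular and $\tau$ upper regular. $\widehat W$ is the set of critical simplices. $K[p]$ is the $\mathbb{Z}_2$-vector space of subsets of $K^{(p)}$ (sum = symmetric difference, $0=\emptyset$), $\widehat W[p]=\{c\in K[p]:c\subseteq\widehat W\}$. For $\sigma\in K^{(p)}$, $\partial(\sigma)=\{\tau\in K^{(p-1)}:\tau\subset\sigma\}$, $\delta(\sigma)=\{\tau\in K^{(p+1)}:\sigma\subset\tau\}$.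 The reference map $\curlywedge$ is the unique map assigning to each $p$-simplex an element of $\widehat W[p]$, with linear extension $\curlywedge_p:K[p]\to\widehat W[p]$, such that $\curlywedge(\nu)=\{\nu\}$ for critical $\nu$ and $\curlywedge(\tau)=0=\curlywedge(\partial(\tau))$ for upper regular $\tau$ (with $\partial(\tau)$ viewed as a chain); the coreference map $\curlyvee$ (linear extension $\curlyvee_p$) is the unique such map with $\curlyvee(\nu)=\{\nu\}$ for critical $\nu$ and $\curlyvee(\sigma)=0=\curlyvee(\delta(\sigma))$ for lower regular $\sigma$. The extension and coextension maps are the linear maps $\widetilde\curlywedge_p,\widetilde\curlyvee_p:\widehat W[p]\to K[p]$ with $\widetilde\curlywedge(\kappa)=\{\nu\in K:\kappa\in\curlyvee(\nu)\}$ and $\widetilde\curlyvee(\kappa)=\{\nu\in K:\kappa\in\curlywedge(\nu)\}$ for critical $p$-simplices $\kappa$. $\overline O[p]$ and $\underline O[p]$ denote the images of $\widetilde\curlywedge_p$ and $\widetilde\curlyvee_p$ respectively (subspaces of $K[p]$). *)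

theory Defs
  imports Main
begin

definition simplicial_complex :: "'v set set \<Rightarrow> bool" where
  "simplicial_complex K \<longleftrightarrow> finite K \<and>
     (\<forall>\<sigma>\<in>K. \<sigma> \<noteq> {} \<and> finite \<sigma> \<and> (\<forall>\<tau>. \<tau> \<subseteq> \<sigma> \<and> \<tau> \<noteq> {} \<longrightarrow> \<tau> \<in> K))"

definition simplices :: "'v set set \<Rightarrow> nat \<Rightarrow> 'v set set" where
  "simplices K p = {\<sigma>\<in>K. card \<sigma> = Suc p}"

definition free_pair :: "'v set set \<Rightarrow> 'v set \<Rightarrow> 'v set \<Rightarrow> bool" where
  "free_pair K \<sigma> \<tau> \<longleftrightarrow> \<sigma> \<in> K \<and> \<tau> \<in> K \<and> \<sigma> \<subset> \<tau> \<and> (\<forall>x\<in>K. \<sigma> \<subseteq> x \<longrightarrow> x = \<sigma> \<or> x = \<tau>)"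

definition facet :: "'v set set \<Rightarrow> 'v set \<Rightarrow> bool" where
  "facet K \<nu> \<longleftrightarrow> \<nu> \<in> K \<and> \<not> (\<exists>x\<in>K. \<nu> \<subset> x)"

definition expansion_step :: "'v set set \<Rightarrow> 'v set set \<Rightarrow> 'v set \<Rightarrow> 'v set \<Rightarrow> bool" where
  "expansion_step L K \<sigma> \<tau> \<longleftrightarrow> free_pair K \<sigma> \<tau> \<and> L = K - {\<sigma>, \<tau>}"

definition filling_step :: "'v set set \<Rightarrow> 'v set set \<Rightarrow> 'v set \<Rightarrow> bool" where
  "filling_step L K \<nu> \<longleftrightarrow> facet K \<nu> \<and> L = K - {\<nu>}"

definition morse_sequence :: "'v set set list \<Rightarrow> 'v set set \<Rightarrow> bool" where
  "morse_sequence Ks K \<longleftrightarrow> Ks \<noteq> [] \<and> hd Ks = {} \<and> last Ks = K \<and>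
     (\<forall>X\<in>set Ks. simplicial_complex X) \<and>
     (\<forall>i < length Ks - 1.
        (\<exists>\<sigma> \<tau>. expansion_step (Ks!i) (Ks!Suc i) \<sigma> \<tau>) \<or>
        (\<exists>\<nu>. filling_step (Ks!i) (Ks!Suc i) \<nu>))"

definition critical :: "'v set set list \<Rightarrow> 'v set set" where
  "critical Ks = {\<nu>. \<exists>i < length Ks - 1. filling_step (Ks!i) (Ks!Suc i) \<nu>}"

definition lower_regular :: "'v set set list \<Rightarrow> 'v set \<Rightarrow> bool" where
  "lower_regular Ks \<sigma> \<longleftrightarrow> (\<exists>i < length Ks - 1. \<exists>\<tau>. expansion_step (Ks!i) (Ks!Suc i) \<sigma> \<tau>)"

definition upper_regular :: "'v set set list \<Rightarrow> 'v set \<Rightarrow> bool" where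
  "upper_regular Ks \<tau> \<longleftrightarrow> (\<exists>i < length Ks - 1. \<exists>\<sigma>. expansion_step (Ks!i) (Ks!Suc i) \<sigma> \<tau>)"

text \<open>p-chains K[p]: subsets of the p-simplices (sum = symmetric difference)\<close>
definition chains :: "'v set set \<Rightarrow> nat \<Rightarrow> 'v set set set" where
  "chains K p = Pow (simplices K p)"

definition crit_chains :: "'v set set list \<Rightarrow> nat \<Rightarrow> 'v set set set" where
  "crit_chains Ks p = {c \<in> chains (last Ks) p. c \<subseteq> critical Ks}"

definition chain_add :: "'a set \<Rightarrow> 'a set \<Rightarrow> 'a set" where
  "chain_add c d = (c - d) \<union> (d - c)"

text \<open>Z2-linear extension of a map from simplices to chains: the sum over Z2 of f(\<sigma>), \<sigma> \<in> c\<close>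
definition lin :: "('a \<Rightarrow> 'b set) \<Rightarrow> 'a set \<Rightarrow> 'b set" where
  "lin f c = {\<kappa>. odd (card {\<sigma>\<in>c. \<kappa> \<in> f \<sigma>})}"

definition boundary :: "'v set set \<Rightarrow> 'v set \<Rightarrow> 'v set set" where
  "boundary K \<sigma> = {\<tau>\<in>K. card \<tau> + 1 = card \<sigma> \<and> \<tau> \<subset> \<sigma>}"

definition coboundary :: "'v set set \<Rightarrow> 'v set \<Rightarrow> 'v set set" where
  "coboundary K \<sigma> = {\<tau>\<in>K. card \<tau> = card \<sigma> + 1 \<and> \<sigma> \<subset> \<tau>}"

text \<open>Values outside K are fixed to 0 (= {}) so that the map is unique as a HOL function.\<close>
definition is_reference :: "'v set set list \<Rightarrow> ('v set \<Rightarrow> 'v set set) \<Rightarrow> bool" where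
  "is_reference Ks f \<longleftrightarrow>
     (\<forall>\<sigma>. \<sigma> \<notin> last Ks \<longrightarrow> f \<sigma> = {}) \<and>
     (\<forall>\<sigma>\<in>last Ks. f \<sigma> \<subseteq> critical Ks \<inter> simplices (last Ks) (card \<sigma> - 1)) \<and>
     (\<forall>\<nu>\<in>critical Ks. f \<nu> = {\<nu>}) \<and>
     (\<forall>\<tau>. upper_regular Ks \<tau> \<longrightarrow> f \<tau> = {} \<and> lin f (boundary (last Ks) \<tau>) = {})"

definition is_coreference :: "'v set set list \<Rightarrow> ('v set \<Rightarrow> 'v set set) \<Rightarrow> bool" where
  "is_coreference Ks f \<longleftrightarrow>
     (\<forall>\<sigma>. \<sigma> \<notin> last Ks \<longrightarrow> f \<sigma> = {}) \<and>
     (\<forall>\<sigma>\<in>last Ks. f \<sigma> \<subseteq> critical Ks \<inter> simplices (last Ks) (card \<sigma> - 1)) \<and>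
     (\<forall>\<nu>\<in>critical Ks. f \<nu> = {\<nu>}) \<and>
     (\<forall>\<sigma>. lower_regular Ks \<sigma> \<longrightarrow> f \<sigma> = {} \<and> lin f (coboundary (last Ks) \<sigma>) = {})"

definition reference :: "'v set set list \<Rightarrow> 'v set \<Rightarrow> 'v set set" where
  "reference Ks = (THE f. is_reference Ks f)"

definition coreference :: "'v set set list \<Rightarrow> 'v set \<Rightarrow> 'v set set" where
  "coreference Ks = (THE f. is_coreference Ks f)"

definition extension :: "'v set set list \<Rightarrow> 'v set \<Rightarrow> 'v set set" where
  "extension Ks \<kappa> = {\<nu>\<in>last Ks. \<kappa> \<in> coreference Ks \<nu>}"

definition coextension :: "'v set set list \<Rightarrow> 'v set \<Rightarrow> 'v set set" where
  "coextension Ks \<kappa> = {\<nu>\<in>last Ks. \<kappa> \<in> reference Ks \<nu>}"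

text \<open>\<open>\<overline>O[p]\<close> and \<open>\<underline>O[p]\<close>: images of the (co)extension maps on \<open>\<widehat>W[p]\<close>\<close>
definition O_upper :: "'v set set list \<Rightarrow> nat \<Rightarrow> 'v set set set" where
  "O_upper Ks p = lin (extension Ks) ` crit_chains Ks p"

definition O_lower :: "'v set set list \<Rightarrow> nat \<Rightarrow> 'v set set set" where
  "O_lower Ks p = lin (coextension Ks) ` crit_chains Ks p"

end

theory Submission
  imports Defs
begin

(* A Morse sequence adds every simplex of K exactly once, either alone (a critical simplex) or
  together with a partner as a free pair (sigma, tau). The conditions defining the reference map
  read as a recursion along the sequence: critical simplices are fixed, upper regular ones are
  sent to 0, and the vanishing on the boundary of tau forces the value at sigma to be the value
  on the rest of that boundary, which consists of simplices added before sigma. Such a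
  well-founded recursion has exactly one solution; the coreference map is the same recursion run
  backwards along the sequence, over coboundaries.
  Every regular simplex is killed by the reference or by the coreference map, so for critical
  kappa the only simplex nu with kappa in the coreference of nu and a nonzero reference is kappa
  itself. Hence the reference map is a left inverse of the extension map on critical chains, and
  the extension map is a linear isomorphism onto its image; dually for the coextension. *)

section \<open>Linear extension over Z2\<close>

lemma chain_add_eq_empty_iff: "chain_add c d = {} \<longleftrightarrow> c = d"
  by (auto simp: chain_add_def)

lemma insert_eq_chain_add: "a \<notin> c \<Longrightarrow> insert a c = chain_add {a} c"
  by (auto simp: chain_add_def)

lemma lin_singleton: "lin f {a} = f a"
proof -
  have "{x \<in> {a}. k \<in> f x} = (if k \<in> f a then {a} else {})" for k
    by auto
  then show ?thesis
    by (auto simp: lin_def)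
qed

lemma lin_id: "lin (\<lambda>x. {x}) c = c"
proof -
  have "{x \<in> c. k \<in> {x}} = (if k \<in> c then {k} else {})" for k
    by auto
  then show ?thesis
    by (auto simp: lin_def)
qed

lemma lin_cong:
  assumes "\<And>x. x \<in> c \<Longrightarrow> f x = g x"
  shows "lin f c = lin g c"
proof -
  have "{x \<in> c. k \<in> f x} = {x \<in> c. k \<in> g x}" for k
    using assms by auto
  then show ?thesis
    by (simp add: lin_def)
qed

lemma lin_subset_Union: "lin f c \<subseteq> \<Union> (f ` c)"
proof
  fix k
  assume "k \<in> lin f c"
  then have "{x \<in> c. k \<in> f x} \<noteq> {}"
    unfolding lin_def by (auto dest: odd_card_imp_not_empty)
  then show "k \<in> \<Union> (f ` c)"
    by blast
qed

lemma lin_chain_add: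
  assumes "finite c" "finite d"
  shows "lin f (chain_add c d) = chain_add (lin f c) (lin f d)"
proof (rule set_eqI)
  fix k
  define A B where "A = {x \<in> c. k \<in> f x}" and "B = {x \<in> d. k \<in> f x}"
  have "finite A" "finite B"
    using assms by (simp_all add: A_def B_def)
  have "{x \<in> chain_add c d. k \<in> f x} = sym_diff A B"
    by (auto simp: A_def B_def chain_add_def)
  then have lhs: "k \<in> lin f (chain_add c d) \<longleftrightarrow> odd (card (sym_diff A B))"
    by (simp add: lin_def)
  have rhs: "k \<in> chain_add (lin f c) (lin f d) \<longleftrightarrow> odd (card A) \<noteq> odd (card B)"
    unfolding lin_def chain_add_def A_def B_def by auto
  have "card (sym_diff A B) = card (A - B) + card (B - A)"
    using \<open>finite A\<close> \<open>finite B\<close> by (intro card_Un_disjoint) auto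
  then have "card (sym_diff A B) + 2 * card (A \<inter> B) = card A + card B"
    using card_Int_Diff[OF \<open>finite A\<close>, of B] card_Int_Diff[OF \<open>finite B\<close>, of A]
    by (simp add: Int_commute)
  then show "k \<in> lin f (chain_add c d) \<longleftrightarrow> k \<in> chain_add (lin f c) (lin f d)"
    unfolding lhs rhs by presburger
qed

lemma lin_insert:
  assumes "finite c" "a \<notin> c"
  shows "lin f (insert a c) = chain_add (f a) (lin f c)"
  unfolding insert_eq_chain_add[OF \<open>a \<notin> c\<close>] using \<open>finite c\<close> by (simp add: lin_chain_add lin_singleton)

lemma lin_lin:
  assumes "finite c" "\<And>x. x \<in> c \<Longrightarrow> finite (g x)"
  shows "lin f (lin g c) = lin (\<lambda>x. lin f (g x)) c"
  using assms
proof (induction c rule: finite_induct)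
  case (insert a c)
  have "finite (\<Union> (g ` c))"
    using insert.hyps(1) insert.prems by simp
  then have "finite (lin g c)"
    using lin_subset_Union finite_subset by metis
  then have "lin f (lin g (insert a c)) = chain_add (lin f (g a)) (lin f (lin g c))"
    using insert.hyps insert.prems by (simp add: lin_insert lin_chain_add)
  also have "\<dots> = lin (\<lambda>x. lin f (g x)) (insert a c)"
    using insert.hyps insert.prems insert.IH by (simp add: lin_insert)
  finally show ?case .
qed (simp add: lin_def)

lemma lin_transpose_singleton:
  assumes "\<kappa> \<in> C" and "C \<subseteq> K" and "\<forall>x\<in>C. f x = {x}" and "\<forall>x\<in>C. g x = {x}"
    and "\<forall>x\<in>K - C. f x = {} \<or> g x = {}"
  shows "lin f {\<nu> \<in> K. \<kappa> \<in> g \<nu>} = {\<kappa>}"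
proof -
  have "\<nu> \<in> K \<and> \<kappa> \<in> g \<nu> \<and> k \<in> f \<nu> \<longleftrightarrow> \<nu> = \<kappa> \<and> k = \<kappa>" for \<nu> k
  proof
    assume "\<nu> \<in> K \<and> \<kappa> \<in> g \<nu> \<and> k \<in> f \<nu>"
    moreover from this have "\<nu> \<in> C"
      using assms(5) by blast
    ultimately show "\<nu> = \<kappa> \<and> k = \<kappa>"
      using assms(3,4) by auto
  qed (use assms(1-4) in auto)
  then have "{\<nu> \<in> {\<nu> \<in> K. \<kappa> \<in> g \<nu>}. k \<in> f \<nu>} = (if k = \<kappa> then {\<kappa>} else {})" for k
    by auto
  then show ?thesis
    by (simp add: lin_def)
qed

lemma lin_transpose_left_inverse:
  assumes "finite K" and "C \<subseteq> K" and "\<forall>x\<in>C. f x = {x}" and "\<forall>x\<in>C. g x = {x}"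
    and "\<forall>x\<in>K - C. f x = {} \<or> g x = {}" and "c \<subseteq> C"
  shows "lin f (lin (\<lambda>\<kappa>. {\<nu> \<in> K. \<kappa> \<in> g \<nu>}) c) = c"
proof -
  have "finite c"
    using assms(1,2,6) by (meson finite_subset)
  then have "lin f (lin (\<lambda>\<kappa>. {\<nu> \<in> K. \<kappa> \<in> g \<nu>}) c) = lin (\<lambda>\<kappa>. lin f {\<nu> \<in> K. \<kappa> \<in> g \<nu>}) c"
    using \<open>finite K\<close> by (intro lin_lin) simp_all
  also have "\<dots> = lin (\<lambda>\<kappa>. {\<kappa>}) c"
    using assms(6) by (intro lin_cong lin_transpose_singleton[OF _ assms(2-5)]) blast
  finally show ?thesis
    by (simp add: lin_id)
qed

lemma lin_iso_onto_image:
  assumes "\<forall>c\<in>A. finite c" and "\<forall>c\<in>A. lin R (lin E c) = c"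
  shows "bij_betw (lin E) A (lin E ` A) \<and>
    (\<forall>c\<in>A. \<forall>d\<in>A. lin E (chain_add c d) = chain_add (lin E c) (lin E d)) \<and>
    (\<forall>c\<in>A. lin R (lin E c) = c) \<and> (\<forall>d\<in>lin E ` A. lin E (lin R d) = d)"
proof -
  have "inj_on (lin E) A"
    using assms(2) by (metis inj_on_inverseI)
  then show ?thesis
    using assms by (simp add: bij_betw_def lin_chain_add)
qed

section \<open>Reference maps of acyclic matchings\<close>

lemma wf_ex1_fixpoint:
  assumes "wf R" and "adm_wf R F"
  shows "\<exists>!f. f = F f"
proof (rule ex1I)
  show "wfrec R F = F (wfrec R F)"
    using assms by (rule wfrec_fixpoint)
next
  fix f
  assume f: "f = F f"
  show "f = wfrec R F"
  proof
    fix x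
    show "f x = wfrec R F x"
      using \<open>wf R\<close>
    proof (induction x rule: wf_induct_rule)
      case (less x)
      then have "F f x = F (wfrec R F) x"
        using \<open>adm_wf R F\<close> by (simp add: adm_wf_def)
      then show ?case
        using f wfrec_fixpoint[OF assms] by metis
    qed
  qed
qed

text \<open>The reference map of the Morse sequence is the one for its expansion pairs and the boundary,
  the coreference map the one for the converse pairs and the coboundary.\<close>

definition reference_map ::
    "'a set \<Rightarrow> 'a set \<Rightarrow> ('a \<times> 'a) set \<Rightarrow> ('a \<Rightarrow> 'a set) \<Rightarrow> ('a \<Rightarrow> nat) \<Rightarrow> ('a \<Rightarrow> 'a set) \<Rightarrow> bool"
  where "reference_map K C M N dim f \<longleftrightarrow>
    (\<forall>x. x \<notin> K \<longrightarrow> f x = {}) \<and> (\<forall>x\<in>K. f x \<subseteq> {c \<in> C. dim c = dim x}) \<and>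
    (\<forall>x\<in>C. f x = {x}) \<and> (\<forall>t\<in>Range M. f t = {} \<and> lin f (N t) = {})"

definition reference_step ::
    "'a set \<Rightarrow> ('a \<times> 'a) set \<Rightarrow> ('a \<Rightarrow> 'a set) \<Rightarrow> ('a \<Rightarrow> 'a set) \<Rightarrow> 'a \<Rightarrow> 'a set"
  where "reference_step C M N f x =
    (if x \<in> C then {x} else if x \<in> Domain M then lin f (N (THE t. (x, t) \<in> M) - {x}) else {})"

locale acyclic_matching =
  fixes K C :: "'a set" and M :: "('a \<times> 'a) set" and N :: "'a \<Rightarrow> 'a set"
    and rank dim :: "'a \<Rightarrow> nat"
  assumes finite_carrier: "finite K" and C_subset: "C \<subseteq> K" and Domain_subset: "Domain M \<subseteq> K"
    and K_subset: "K \<subseteq> C \<union> Domain M \<union> Range M"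
    and disjoint_C_Domain: "C \<inter> Domain M = {}" and disjoint_C_Range: "C \<inter> Range M = {}"
    and disjoint_Domain_Range: "Domain M \<inter> Range M = {}"
    and single_valued: "single_valued M"
    and pivot: "(s, t) \<in> M \<Longrightarrow> s \<in> N t"
    and earlier: "(s, t) \<in> M \<Longrightarrow> y \<in> N t - {s} \<Longrightarrow> y \<in> K \<and> rank y < rank s \<and> dim y = dim s"
begin

lemma reference_step_pair:
  assumes "(s, t) \<in> M"
  shows "reference_step C M N f s = lin f (N t - {s})"
proof -
  have "(THE t. (s, t) \<in> M) = t"
    using assms single_valued by (auto dest: single_valuedD)
  then show ?thesis
    using assms disjoint_C_Domain by (auto simp: reference_step_def)
qed

lemma lin_N_pair:
  assumes "(s, t) \<in> M"
  shows "lin f (N t) = chain_add (f s) (lin f (N t - {s}))"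
proof -
  have "finite (N t - {s})"
    using earlier[OF assms] finite_carrier by (meson finite_subset subsetI)
  then show ?thesis
    using lin_insert[of "N t - {s}" s f] pivot[OF assms] by (simp add: insert_absorb)
qed

lemma adm_wf_reference_step: "adm_wf (measure rank) (reference_step C M N)"
  unfolding adm_wf_def
proof (intro allI impI)
  fix f g :: "'a \<Rightarrow> 'a set" and x
  assume below: "\<forall>y. (y, x) \<in> measure rank \<longrightarrow> f y = g y"
  show "reference_step C M N f x = reference_step C M N g x"
  proof (cases "x \<in> Domain M")
    case True
    then obtain t where xt: "(x, t) \<in> M"
      by blast
    have "lin f (N t - {x}) = lin g (N t - {x})"
      by (rule lin_cong) (use earlier[OF xt] below in simp)
    then show ?thesis
      using reference_step_pair[OF xt] by simp
  qed (simp add: reference_step_def)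
qed

lemma reference_map_fixpoint:
  assumes "reference_map K C M N dim f"
  shows "f = reference_step C M N f"
proof
  fix x
  consider "x \<in> Domain M" | "x \<in> C" | "x \<in> Range M" | "x \<notin> K"
    using K_subset by blast
  then show "f x = reference_step C M N f x"
  proof cases
    case 1
    then obtain t where xt: "(x, t) \<in> M"
      by blast
    then have "lin f (N t) = {}"
      using assms unfolding reference_map_def by blast
    then have "f x = lin f (N t - {x})"
      using lin_N_pair[OF xt, of f] by (simp add: chain_add_eq_empty_iff)
    then show ?thesis
      using reference_step_pair[OF xt] by simp
  qed (use assms C_subset Domain_subset disjoint_C_Range disjoint_Domain_Range in
    \<open>auto simp: reference_map_def reference_step_def\<close>)
qed

lemma fixpoint_graded:
  assumes "f = reference_step C M N f" and "x \<in> K"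
  shows "f x \<subseteq> {c \<in> C. dim c = dim x}"
  using assms(2)
proof (induction x rule: measure_induct_rule[of rank])
  case (less x)
  show ?case
  proof (cases "x \<in> Domain M")
    case True
    then obtain t where xt: "(x, t) \<in> M"
      by blast
    have "f x = lin f (N t - {x})"
      using fun_cong[OF assms(1), of x] reference_step_pair[OF xt] by simp
    also have "\<dots> \<subseteq> \<Union> (f ` (N t - {x}))"
      by (rule lin_subset_Union)
    also have "\<dots> \<subseteq> {c \<in> C. dim c = dim x}"
    proof (rule UN_least)
      fix y
      assume "y \<in> N t - {x}"
      then have "y \<in> K" "rank y < rank x" "dim y = dim x"
        using earlier[OF xt] by auto
      then show "f y \<subseteq> {c \<in> C. dim c = dim x}"
        using less.IH[of y] by simp
    qed
    finally show ?thesis .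
  next
    case False
    then show ?thesis
      using fun_cong[OF assms(1), of x] less.prems by (auto simp: reference_step_def)
  qed
qed

lemma fixpoint_reference_map:
  assumes fixpoint: "f = reference_step C M N f"
  shows "reference_map K C M N dim f"
  unfolding reference_map_def
proof (intro conjI ballI allI impI)
  fix t
  assume "t \<in> Range M"
  then show "f t = {}"
    using fun_cong[OF fixpoint, of t] disjoint_C_Range disjoint_Domain_Range by (auto simp: reference_step_def)
  from \<open>t \<in> Range M\<close> obtain s where st: "(s, t) \<in> M"
    by blast
  then have "f s = lin f (N t - {s})"
    using fun_cong[OF fixpoint, of s] reference_step_pair by simp
  then show "lin f (N t) = {}"
    using lin_N_pair[OF st, of f] by (simp add: chain_add_eq_empty_iff)
next
  fix x
  assume "x \<notin> K"
  then show "f x = {}"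
    using fun_cong[OF fixpoint, of x] C_subset Domain_subset by (auto simp: reference_step_def)
next
  fix x
  assume "x \<in> C"
  then show "f x = {x}"
    using fun_cong[OF fixpoint, of x] by (simp add: reference_step_def)
qed (rule fixpoint_graded[OF fixpoint])

lemma ex1_reference_map: "\<exists>!f. reference_map K C M N dim f"
proof -
  have "\<exists>!f. f = reference_step C M N f"
    using wf_measure adm_wf_reference_step by (rule wf_ex1_fixpoint)
  then show ?thesis
    using reference_map_fixpoint fixpoint_reference_map by metis
qed

end

section \<open>Morse sequences\<close>

lemma simplicial_complex_face:
  "simplicial_complex X \<Longrightarrow> \<tau> \<in> X \<Longrightarrow> \<rho> \<subseteq> \<tau> \<Longrightarrow> \<rho> \<noteq> {} \<Longrightarrow> \<rho> \<in> X"
  unfolding simplicial_complex_def by blast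

lemma simplicial_complex_simplex: "simplicial_complex X \<Longrightarrow> \<sigma> \<in> X \<Longrightarrow> \<sigma> \<noteq> {} \<and> finite \<sigma>"
  unfolding simplicial_complex_def by blast

lemma free_pair_card:
  assumes "simplicial_complex X" and "free_pair X \<sigma> \<tau>"
  shows "card \<tau> = card \<sigma> + 1"
proof -
  have "\<sigma> \<subset> \<tau>" "\<sigma> \<in> X" "\<tau> \<in> X"
    using assms(2) by (auto simp: free_pair_def)
  then obtain v where v: "v \<in> \<tau>" "v \<notin> \<sigma>"
    by blast
  have "insert v \<sigma> \<in> X"
    using simplicial_complex_face[OF assms(1) \<open>\<tau> \<in> X\<close>] \<open>\<sigma> \<subset> \<tau>\<close> v by simp
  then have "\<tau> = insert v \<sigma>"
    using assms(2) v by (auto simp: free_pair_def)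
  moreover have "finite \<sigma>"
    using simplicial_complex_simplex[OF assms(1) \<open>\<sigma> \<in> X\<close>] by simp
  ultimately show ?thesis
    using v by simp
qed

lemma expansion_step_added: "expansion_step L X \<sigma> \<tau> \<Longrightarrow> L \<subseteq> X \<and> X - L = {\<sigma>, \<tau>}"
  by (auto simp: expansion_step_def free_pair_def)

lemma filling_step_added: "filling_step L X \<nu> \<Longrightarrow> L \<subseteq> X \<and> X - L = {\<nu>}"
  by (auto simp: filling_step_def facet_def)

definition expansion_pairs :: "'v set set list \<Rightarrow> ('v set \<times> 'v set) set" where
  "expansion_pairs Ks = {(\<sigma>, \<tau>). \<exists>i < length Ks - 1. expansion_step (Ks ! i) (Ks ! Suc i) \<sigma> \<tau>}"

lemma Domain_expansion_pairs: "Domain (expansion_pairs Ks) = Collect (lower_regular Ks)"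
  unfolding expansion_pairs_def lower_regular_def by blast

lemma Range_expansion_pairs: "Range (expansion_pairs Ks) = Collect (upper_regular Ks)"
  unfolding expansion_pairs_def upper_regular_def by blast

definition birth :: "'v set set list \<Rightarrow> 'v set \<Rightarrow> nat" where
  "birth Ks x = (LEAST i. x \<in> Ks ! i)"

locale morse_seq =
  fixes Ks :: "'v set set list" and K :: "'v set set"
  assumes morse: "morse_sequence Ks K"
begin

abbreviation n :: nat where "n \<equiv> length Ks - 1"

lemma Ks_not_Nil: "Ks \<noteq> []"
  using morse by (simp add: morse_sequence_def)

lemma Ks_0: "Ks ! 0 = {}"
  using morse Ks_not_Nil by (simp add: morse_sequence_def flip: hd_conv_nth)

lemma last_Ks: "last Ks = K"
  using morse by (simp add: morse_sequence_def)

lemma Ks_n: "Ks ! n = K"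
  using last_Ks Ks_not_Nil by (simp add: last_conv_nth)

lemma simplicial_complex_nth:
  assumes "i \<le> n"
  shows "simplicial_complex (Ks ! i)"
proof -
  have "0 < length Ks"
    using Ks_not_Nil by simp
  then have "Ks ! i \<in> set Ks"
    using assms by (intro nth_mem) linarith
  then show ?thesis
    using morse by (simp add: morse_sequence_def)
qed

lemma simplicial_complex_K: "simplicial_complex K"
  using simplicial_complex_nth Ks_n by force

lemma finite_K: "finite K"
  using simplicial_complex_K unfolding simplicial_complex_def by blast

lemma morse_step:
  "i < n \<Longrightarrow> (\<exists>\<sigma> \<tau>. expansion_step (Ks ! i) (Ks ! Suc i) \<sigma> \<tau>) \<or> (\<exists>\<nu>. filling_step (Ks ! i) (Ks ! Suc i) \<nu>)"
  using morse by (simp add: morse_sequence_def)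

lemma nth_subset_Suc:
  assumes "i < n"
  shows "Ks ! i \<subseteq> Ks ! Suc i"
  using morse_step[OF assms] by (elim disjE exE) (auto dest: expansion_step_added filling_step_added)

lemma nth_mono:
  assumes "i \<le> j" and "j \<le> n"
  shows "Ks ! i \<subseteq> Ks ! j"
  using assms
proof (induction j rule: dec_induct)
  case (step j)
  then show ?case
    using nth_subset_Suc[of j] by simp
qed simp

lemma nth_subset_K: "i \<le> n \<Longrightarrow> Ks ! i \<subseteq> K"
  using nth_mono Ks_n by fastforce

lemma mem_nth_iff_birth_le:
  assumes "x \<in> K" and "i \<le> n"
  shows "x \<in> Ks ! i \<longleftrightarrow> birth Ks x \<le> i"
proof
  show "x \<in> Ks ! i \<Longrightarrow> birth Ks x \<le> i"
    unfolding birth_def by (rule Least_le)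
next
  have "x \<in> Ks ! n"
    using assms(1) Ks_n by simp
  then have "x \<in> Ks ! birth Ks x" and "birth Ks x \<le> n"
    unfolding birth_def by (auto intro: LeastI Least_le)
  then show "birth Ks x \<le> i \<Longrightarrow> x \<in> Ks ! i"
    using nth_mono assms(2) by blast
qed

lemma birth_added: "i < n \<Longrightarrow> x \<in> Ks ! Suc i - Ks ! i \<Longrightarrow> birth Ks x = Suc i"
  using mem_nth_iff_birth_le[of x i] mem_nth_iff_birth_le[of x "Suc i"] nth_subset_K[of "Suc i"] by auto

lemma added_at_some_step:
  assumes "x \<in> K"
  shows "\<exists>i<n. x \<in> Ks ! Suc i - Ks ! i"
proof -
  have "birth Ks x \<le> n"
    using mem_nth_iff_birth_le[OF assms, of n] assms Ks_n by simp
  moreover have "birth Ks x \<noteq> 0"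
    using mem_nth_iff_birth_le[OF assms, of 0] Ks_0 by auto
  then obtain i where "birth Ks x = Suc i"
    using not0_implies_Suc by blast
  ultimately have "i < n" and "x \<in> Ks ! Suc i - Ks ! i"
    using mem_nth_iff_birth_le[OF assms, of i] mem_nth_iff_birth_le[OF assms, of "Suc i"] by auto
  then show ?thesis
    by blast
qed

lemma added_once:
  assumes "i < n" and "j < n" and "x \<in> Ks ! Suc i - Ks ! i" and "x \<in> Ks ! Suc j - Ks ! j"
  shows "i = j"
  using birth_added[OF assms(1,3)] birth_added[OF assms(2,4)] by simp

lemma critical_added:
  assumes "\<nu> \<in> critical Ks"
  shows "\<exists>i<n. Ks ! Suc i - Ks ! i = {\<nu>}"
proof -
  obtain i where "i < n" and "filling_step (Ks ! i) (Ks ! Suc i) \<nu>"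
    using assms unfolding critical_def by blast
  then show ?thesis
    using filling_step_added by blast
qed

lemma expansion_pair_step:
  assumes "(\<sigma>, \<tau>) \<in> expansion_pairs Ks"
  obtains i where "i < n" and "free_pair (Ks ! Suc i) \<sigma> \<tau>" and "Ks ! Suc i - Ks ! i = {\<sigma>, \<tau>}"
proof -
  obtain i where i: "i < n" and step: "expansion_step (Ks ! i) (Ks ! Suc i) \<sigma> \<tau>"
    using assms unfolding expansion_pairs_def by blast
  show thesis
  proof (rule that[OF i])
    show "free_pair (Ks ! Suc i) \<sigma> \<tau>"
      using step by (simp add: expansion_step_def)
    show "Ks ! Suc i - Ks ! i = {\<sigma>, \<tau>}"
      using expansion_step_added[OF step] by simp
  qed
qed

lemma expansion_pair_added:
  assumes "(\<sigma>, \<tau>) \<in> expansion_pairs Ks"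
  shows "\<exists>i<n. Ks ! Suc i - Ks ! i = {\<sigma>, \<tau>} \<and> \<sigma> \<subset> \<tau>"
proof -
  obtain i where "i < n" "free_pair (Ks ! Suc i) \<sigma> \<tau>" "Ks ! Suc i - Ks ! i = {\<sigma>, \<tau>}"
    using expansion_pair_step[OF assms] by blast
  then show ?thesis
    unfolding free_pair_def by blast
qed

lemma critical_subset_K: "critical Ks \<subseteq> K"
proof
  fix \<nu>
  assume "\<nu> \<in> critical Ks"
  then obtain i where "i < n" "Ks ! Suc i - Ks ! i = {\<nu>}"
    using critical_added by blast
  then show "\<nu> \<in> K"
    using nth_subset_K[of "Suc i"] by auto
qed

lemma expansion_pair_in_K:
  assumes "(\<sigma>, \<tau>) \<in> expansion_pairs Ks"
  shows "\<sigma> \<in> K" and "\<tau> \<in> K"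
proof -
  obtain i where "i < n" "Ks ! Suc i - Ks ! i = {\<sigma>, \<tau>}"
    using expansion_pair_added[OF assms] by blast
  then show "\<sigma> \<in> K" and "\<tau> \<in> K"
    using nth_subset_K[of "Suc i"] by auto
qed

lemma K_subset_classes: "K \<subseteq> critical Ks \<union> Domain (expansion_pairs Ks) \<union> Range (expansion_pairs Ks)"
proof
  fix x
  assume "x \<in> K"
  then obtain i where i: "i < n" "x \<in> Ks ! Suc i - Ks ! i"
    using added_at_some_step by blast
  from morse_step[OF i(1)]
  show "x \<in> critical Ks \<union> Domain (expansion_pairs Ks) \<union> Range (expansion_pairs Ks)"
  proof (elim disjE exE)
    fix \<sigma> \<tau>
    assume step: "expansion_step (Ks ! i) (Ks ! Suc i) \<sigma> \<tau>"
    then have "(\<sigma>, \<tau>) \<in> expansion_pairs Ks"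
      using i(1) by (auto simp: expansion_pairs_def)
    moreover have "x = \<sigma> \<or> x = \<tau>"
      using expansion_step_added[OF step] i(2) by blast
    ultimately show ?thesis
      by blast
  next
    fix \<nu>
    assume step: "filling_step (Ks ! i) (Ks ! Suc i) \<nu>"
    then have "\<nu> \<in> critical Ks"
      using i(1) by (auto simp: critical_def)
    moreover have "x = \<nu>"
      using filling_step_added[OF step] i(2) by blast
    ultimately show ?thesis
      by blast
  qed
qed

lemma critical_Int_Domain: "critical Ks \<inter> Domain (expansion_pairs Ks) = {}"
proof -
  have False if crit: "\<nu> \<in> critical Ks" and pair: "(\<nu>, \<tau>) \<in> expansion_pairs Ks" for \<nu> \<tau>
  proof -
    obtain i where "i < n" and i: "Ks ! Suc i - Ks ! i = {\<nu>}"
      using critical_added[OF crit] by blast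
    obtain j where "j < n" and j: "Ks ! Suc j - Ks ! j = {\<nu>, \<tau>}" and "\<nu> \<subset> \<tau>"
      using expansion_pair_added[OF pair] by blast
    have "i = j"
      using added_once[of i j \<nu>] \<open>i < n\<close> \<open>j < n\<close> i j by blast
    then have "\<tau> \<in> {\<nu>}"
      using i j by (metis insertI1 insertI2)
    then show False
      using \<open>\<nu> \<subset> \<tau>\<close> by simp
  qed
  then show ?thesis
    by blast
qed

lemma critical_Int_Range: "critical Ks \<inter> Range (expansion_pairs Ks) = {}"
proof -
  have False if crit: "\<nu> \<in> critical Ks" and pair: "(\<sigma>, \<nu>) \<in> expansion_pairs Ks" for \<sigma> \<nu>
  proof -
    obtain i where "i < n" and i: "Ks ! Suc i - Ks ! i = {\<nu>}"
      using critical_added[OF crit] by blast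
    obtain j where "j < n" and j: "Ks ! Suc j - Ks ! j = {\<sigma>, \<nu>}" and "\<sigma> \<subset> \<nu>"
      using expansion_pair_added[OF pair] by blast
    have "i = j"
      using added_once[of i j \<nu>] \<open>i < n\<close> \<open>j < n\<close> i j by blast
    then have "\<sigma> \<in> {\<nu>}"
      using i j by (metis insertI1)
    then show False
      using \<open>\<sigma> \<subset> \<nu>\<close> by simp
  qed
  then show ?thesis
    by blast
qed

lemma Domain_Int_Range: "Domain (expansion_pairs Ks) \<inter> Range (expansion_pairs Ks) = {}"
proof -
  have False if lower: "(x, \<tau>) \<in> expansion_pairs Ks" and upper: "(\<sigma>, x) \<in> expansion_pairs Ks" for x \<sigma> \<tau>
  proof -
    obtain i where "i < n" and i: "Ks ! Suc i - Ks ! i = {x, \<tau>}" and "x \<subset> \<tau>"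
      using expansion_pair_added[OF lower] by blast
    obtain j where "j < n" and j: "Ks ! Suc j - Ks ! j = {\<sigma>, x}" and "\<sigma> \<subset> x"
      using expansion_pair_added[OF upper] by blast
    have "i = j"
      using added_once[of i j x] \<open>i < n\<close> \<open>j < n\<close> i j by blast
    then have "\<tau> \<in> {\<sigma>, x}"
      using i j by (metis insertI1 insertI2)
    then have "\<tau> = \<sigma>"
      using \<open>x \<subset> \<tau>\<close> by blast
    then show False
      using \<open>x \<subset> \<tau>\<close> \<open>\<sigma> \<subset> x\<close> by (metis order.asym)
  qed
  then show ?thesis
    by blast
qed

lemma single_valued_expansion_pairs: "single_valued (expansion_pairs Ks)"
proof (rule single_valuedI)
  fix \<sigma> \<tau> \<tau>'
  assume pair: "(\<sigma>, \<tau>) \<in> expansion_pairs Ks" and pair': "(\<sigma>, \<tau>') \<in> expansion_pairs Ks"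
  obtain i where "i < n" and i: "Ks ! Suc i - Ks ! i = {\<sigma>, \<tau>}" and "\<sigma> \<subset> \<tau>"
    using expansion_pair_added[OF pair] by blast
  obtain j where "j < n" and j: "Ks ! Suc j - Ks ! j = {\<sigma>, \<tau>'}"
    using expansion_pair_added[OF pair'] by blast
  have "i = j"
    using added_once[of i j \<sigma>] \<open>i < n\<close> \<open>j < n\<close> i j by blast
  then have "\<tau> \<in> {\<sigma>, \<tau>'}"
    using i j by (metis insertI1 insertI2)
  then show "\<tau> = \<tau>'"
    using \<open>\<sigma> \<subset> \<tau>\<close> by blast
qed

lemma single_valued_converse_expansion_pairs: "single_valued ((expansion_pairs Ks)\<inverse>)"
proof (rule single_valuedI)
  fix \<tau> \<sigma> \<sigma>'
  assume "(\<tau>, \<sigma>) \<in> (expansion_pairs Ks)\<inverse>" and "(\<tau>, \<sigma>') \<in> (expansion_pairs Ks)\<inverse>"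
  then have pair: "(\<sigma>, \<tau>) \<in> expansion_pairs Ks" and pair': "(\<sigma>', \<tau>) \<in> expansion_pairs Ks"
    by simp_all
  obtain i where "i < n" and i: "Ks ! Suc i - Ks ! i = {\<sigma>, \<tau>}" and "\<sigma> \<subset> \<tau>"
    using expansion_pair_added[OF pair] by blast
  obtain j where "j < n" and j: "Ks ! Suc j - Ks ! j = {\<sigma>', \<tau>}"
    using expansion_pair_added[OF pair'] by blast
  have "i = j"
    using added_once[of i j \<tau>] \<open>i < n\<close> \<open>j < n\<close> i j by blast
  then have "\<sigma> \<in> {\<sigma>', \<tau>}"
    using i j by (metis insertI1)
  then show "\<sigma> = \<sigma>'"
    using \<open>\<sigma> \<subset> \<tau>\<close> by blast
qed

lemma expansion_pair_boundary:
  assumes "(\<sigma>, \<tau>) \<in> expansion_pairs Ks"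
  shows "\<sigma> \<in> boundary K \<tau>"
    and "\<forall>\<rho>\<in>boundary K \<tau> - {\<sigma>}. \<rho> \<in> K \<and> birth Ks \<rho> < birth Ks \<sigma> \<and> card \<rho> = card \<sigma>"
proof -
  obtain i where "i < n" and free: "free_pair (Ks ! Suc i) \<sigma> \<tau>" and added: "Ks ! Suc i - Ks ! i = {\<sigma>, \<tau>}"
    using expansion_pair_step[OF assms] by blast
  then have complex: "simplicial_complex (Ks ! Suc i)"
    using simplicial_complex_nth by simp
  have card: "card \<tau> = card \<sigma> + 1"
    using free_pair_card[OF complex free] .
  have "\<sigma> \<subset> \<tau>" and "\<tau> \<in> Ks ! Suc i"
    using free by (simp_all add: free_pair_def)
  then show "\<sigma> \<in> boundary K \<tau>"
    using card expansion_pair_in_K[OF assms] by (simp add: boundary_def)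
  have "birth Ks \<sigma> = Suc i"
    using birth_added[OF \<open>i < n\<close>] added by blast
  show "\<forall>\<rho>\<in>boundary K \<tau> - {\<sigma>}. \<rho> \<in> K \<and> birth Ks \<rho> < birth Ks \<sigma> \<and> card \<rho> = card \<sigma>"
  proof
    fix \<rho>
    assume "\<rho> \<in> boundary K \<tau> - {\<sigma>}"
    then have "\<rho> \<in> K" "\<rho> \<subset> \<tau>" "\<rho> \<noteq> \<sigma>" "card \<rho> + 1 = card \<tau>"
      by (auto simp: boundary_def)
    moreover from this have "\<rho> \<in> Ks ! Suc i"
      using simplicial_complex_face[OF complex \<open>\<tau> \<in> Ks ! Suc i\<close>]
        simplicial_complex_simplex[OF simplicial_complex_K] by blast
    ultimately have "\<rho> \<in> Ks ! i"
      using added by blast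
    then have "birth Ks \<rho> \<le> i"
      using mem_nth_iff_birth_le \<open>\<rho> \<in> K\<close> \<open>i < n\<close> by simp
    then show "\<rho> \<in> K \<and> birth Ks \<rho> < birth Ks \<sigma> \<and> card \<rho> = card \<sigma>"
      using \<open>\<rho> \<in> K\<close> \<open>birth Ks \<sigma> = Suc i\<close> \<open>card \<rho> + 1 = card \<tau>\<close> card by simp
  qed
qed

lemma expansion_pair_coboundary:
  assumes "(\<sigma>, \<tau>) \<in> expansion_pairs Ks"
  shows "\<tau> \<in> coboundary K \<sigma>"
    and "\<forall>\<rho>\<in>coboundary K \<sigma> - {\<tau>}. \<rho> \<in> K \<and> n - birth Ks \<rho> < n - birth Ks \<tau> \<and> card \<rho> = card \<tau>"
proof -
  obtain i where "i < n" and free: "free_pair (Ks ! Suc i) \<sigma> \<tau>" and added: "Ks ! Suc i - Ks ! i = {\<sigma>, \<tau>}"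
    using expansion_pair_step[OF assms] by blast
  have card: "card \<tau> = card \<sigma> + 1"
    using free_pair_card[OF simplicial_complex_nth free] \<open>i < n\<close> by simp
  have "\<sigma> \<subset> \<tau>"
    using free by (simp add: free_pair_def)
  then show "\<tau> \<in> coboundary K \<sigma>"
    using card expansion_pair_in_K[OF assms] by (simp add: coboundary_def)
  have "birth Ks \<tau> = Suc i"
    using birth_added[OF \<open>i < n\<close>] added by blast
  show "\<forall>\<rho>\<in>coboundary K \<sigma> - {\<tau>}. \<rho> \<in> K \<and> n - birth Ks \<rho> < n - birth Ks \<tau> \<and> card \<rho> = card \<tau>"
  proof
    fix \<rho>
    assume "\<rho> \<in> coboundary K \<sigma> - {\<tau>}"
    then have "\<rho> \<in> K" "\<sigma> \<subset> \<rho>" "\<rho> \<noteq> \<tau>" "card \<rho> = card \<sigma> + 1"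
      by (auto simp: coboundary_def)
    then have "\<rho> \<notin> Ks ! Suc i"
      using free unfolding free_pair_def by blast
    then have "Suc i < birth Ks \<rho>"
      using mem_nth_iff_birth_le[OF \<open>\<rho> \<in> K\<close>, of "Suc i"] \<open>i < n\<close> by simp
    moreover have "birth Ks \<rho> \<le> n"
      using mem_nth_iff_birth_le[OF \<open>\<rho> \<in> K\<close>, of n] \<open>\<rho> \<in> K\<close> Ks_n by simp
    ultimately show "\<rho> \<in> K \<and> n - birth Ks \<rho> < n - birth Ks \<tau> \<and> card \<rho> = card \<tau>"
      using \<open>\<rho> \<in> K\<close> \<open>birth Ks \<tau> = Suc i\<close> \<open>card \<rho> = card \<sigma> + 1\<close> card by simp
  qed
qed

lemma subset_critical_simplices_iff:
  "(\<forall>x\<in>K. f x \<subseteq> critical Ks \<inter> simplices K (card x - 1)) \<longleftrightarrow>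
    (\<forall>x\<in>K. f x \<subseteq> {c \<in> critical Ks. card c = card x})"
proof (intro ball_cong refl)
  fix x
  assume "x \<in> K"
  then have "card x \<noteq> 0"
    using simplicial_complex_simplex[OF simplicial_complex_K] by simp
  then have "critical Ks \<inter> simplices K (card x - 1) = {c \<in> critical Ks. card c = card x}"
    using critical_subset_K by (auto simp: simplices_def)
  then show "f x \<subseteq> critical Ks \<inter> simplices K (card x - 1) \<longleftrightarrow> f x \<subseteq> {c \<in> critical Ks. card c = card x}"
    by (rule arg_cong)
qed

lemma is_reference_iff:
  "is_reference Ks f \<longleftrightarrow> reference_map K (critical Ks) (expansion_pairs Ks) (boundary K) card f"
  unfolding is_reference_def reference_map_def last_Ks Range_expansion_pairs subset_critical_simplices_iff
  by simp

lemma is_coreference_iff: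
  "is_coreference Ks f \<longleftrightarrow> reference_map K (critical Ks) ((expansion_pairs Ks)\<inverse>) (coboundary K) card f"
  unfolding is_coreference_def reference_map_def last_Ks Range_converse Domain_expansion_pairs
    subset_critical_simplices_iff
  by simp

lemma is_reference_reference: "is_reference Ks (reference Ks)"
proof -
  interpret acyclic_matching K "critical Ks" "expansion_pairs Ks" "boundary K" "birth Ks" card
  proof
    show "Domain (expansion_pairs Ks) \<subseteq> K"
      using expansion_pair_in_K by blast
    show "\<And>\<sigma> \<tau>. (\<sigma>, \<tau>) \<in> expansion_pairs Ks \<Longrightarrow> \<sigma> \<in> boundary K \<tau>"
      by (rule expansion_pair_boundary(1))
    show "\<And>\<sigma> \<tau> \<rho>. (\<sigma>, \<tau>) \<in> expansion_pairs Ks \<Longrightarrow> \<rho> \<in> boundary K \<tau> - {\<sigma>} \<Longrightarrow>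
        \<rho> \<in> K \<and> birth Ks \<rho> < birth Ks \<sigma> \<and> card \<rho> = card \<sigma>"
      using expansion_pair_boundary(2) by blast
  qed (fact finite_K critical_subset_K K_subset_classes critical_Int_Domain critical_Int_Range
      Domain_Int_Range single_valued_expansion_pairs)+
  have "\<exists>!f. is_reference Ks f"
    using ex1_reference_map by (simp add: is_reference_iff)
  then show ?thesis
    unfolding reference_def by (rule theI')
qed

lemma is_coreference_coreference: "is_coreference Ks (coreference Ks)"
proof -
  interpret acyclic_matching K "critical Ks" "(expansion_pairs Ks)\<inverse>" "coboundary K"
    "\<lambda>\<rho>. n - birth Ks \<rho>" card
  proof
    show "Domain ((expansion_pairs Ks)\<inverse>) \<subseteq> K"
      using expansion_pair_in_K by blast
    show "K \<subseteq> critical Ks \<union> Domain ((expansion_pairs Ks)\<inverse>) \<union> Range ((expansion_pairs Ks)\<inverse>)"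
      using K_subset_classes by auto
    show "critical Ks \<inter> Domain ((expansion_pairs Ks)\<inverse>) = {}"
      using critical_Int_Range by simp
    show "critical Ks \<inter> Range ((expansion_pairs Ks)\<inverse>) = {}"
      using critical_Int_Domain by simp
    show "Domain ((expansion_pairs Ks)\<inverse>) \<inter> Range ((expansion_pairs Ks)\<inverse>) = {}"
      using Domain_Int_Range by auto
    show "\<And>\<tau> \<sigma>. (\<tau>, \<sigma>) \<in> (expansion_pairs Ks)\<inverse> \<Longrightarrow> \<tau> \<in> coboundary K \<sigma>"
      using expansion_pair_coboundary(1) by blast
    show "\<And>\<tau> \<sigma> \<rho>. (\<tau>, \<sigma>) \<in> (expansion_pairs Ks)\<inverse> \<Longrightarrow> \<rho> \<in> coboundary K \<sigma> - {\<tau>} \<Longrightarrow>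
        \<rho> \<in> K \<and> n - birth Ks \<rho> < n - birth Ks \<tau> \<and> card \<rho> = card \<tau>"
      using expansion_pair_coboundary(2) by blast
  qed (fact finite_K critical_subset_K single_valued_converse_expansion_pairs)+
  have "\<exists>!f. is_coreference Ks f"
    using ex1_reference_map by (simp add: is_coreference_iff)
  then show ?thesis
    unfolding coreference_def by (rule theI')
qed

lemma reference_critical: "\<nu> \<in> critical Ks \<Longrightarrow> reference Ks \<nu> = {\<nu>}"
  using is_reference_reference unfolding is_reference_def by blast

lemma coreference_critical: "\<nu> \<in> critical Ks \<Longrightarrow> coreference Ks \<nu> = {\<nu>}"
  using is_coreference_coreference unfolding is_coreference_def by blast

lemma reference_or_coreference_empty:
  assumes "x \<in> K - critical Ks"
  shows "reference Ks x = {} \<or> coreference Ks x = {}"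
proof -
  have "lower_regular Ks x \<or> upper_regular Ks x"
    using K_subset_classes assms unfolding Domain_expansion_pairs Range_expansion_pairs by blast
  moreover have "upper_regular Ks x \<Longrightarrow> reference Ks x = {}"
    using is_reference_reference unfolding is_reference_def by blast
  moreover have "lower_regular Ks x \<Longrightarrow> coreference Ks x = {}"
    using is_coreference_coreference unfolding is_coreference_def by blast
  ultimately show ?thesis
    by blast
qed

lemma reference_extension:
  assumes "c \<subseteq> critical Ks"
  shows "lin (reference Ks) (lin (extension Ks) c) = c"
proof -
  have "extension Ks = (\<lambda>\<kappa>. {\<nu> \<in> K. \<kappa> \<in> coreference Ks \<nu>})"
    by (simp add: extension_def[abs_def] last_Ks)
  moreover have "lin (reference Ks) (lin (\<lambda>\<kappa>. {\<nu> \<in> K. \<kappa> \<in> coreference Ks \<nu>}) c) = c"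
    using lin_transpose_left_inverse[OF finite_K critical_subset_K _ _ _ assms]
      reference_critical coreference_critical reference_or_coreference_empty
    by (simp add: disj_commute)
  ultimately show ?thesis
    by simp
qed

lemma coreference_coextension:
  assumes "c \<subseteq> critical Ks"
  shows "lin (coreference Ks) (lin (coextension Ks) c) = c"
proof -
  have "coextension Ks = (\<lambda>\<kappa>. {\<nu> \<in> K. \<kappa> \<in> reference Ks \<nu>})"
    by (simp add: coextension_def[abs_def] last_Ks)
  moreover have "lin (coreference Ks) (lin (\<lambda>\<kappa>. {\<nu> \<in> K. \<kappa> \<in> reference Ks \<nu>}) c) = c"
    using lin_transpose_left_inverse[OF finite_K critical_subset_K _ _ _ assms]
      reference_critical coreference_critical reference_or_coreference_empty
    by (simp add: disj_commute)
  ultimately show ?thesis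
    by simp
qed

end

theorem proposition19:
  fixes Ks :: "'v set set list" and K :: "'v set set" and p :: nat
  assumes "morse_sequence Ks K"
  shows "(bij_betw (lin (extension Ks)) (crit_chains Ks p) (O_upper Ks p) \<and>
          (\<forall>c\<in>crit_chains Ks p. \<forall>d\<in>crit_chains Ks p.
             lin (extension Ks) (chain_add c d) = chain_add (lin (extension Ks) c) (lin (extension Ks) d)) \<and>
          (\<forall>c\<in>crit_chains Ks p. lin (reference Ks) (lin (extension Ks) c) = c) \<and>
          (\<forall>d\<in>O_upper Ks p. lin (extension Ks) (lin (reference Ks) d) = d))
       \<and> (bij_betw (lin (coextension Ks)) (crit_chains Ks p) (O_lower Ks p) \<and>
          (\<forall>c\<in>crit_chains Ks p. \<forall>d\<in>crit_chains Ks p.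
             lin (coextension Ks) (chain_add c d) = chain_add (lin (coextension Ks) c) (lin (coextension Ks) d)) \<and>
          (\<forall>c\<in>crit_chains Ks p. lin (coreference Ks) (lin (coextension Ks) c) = c) \<and>
          (\<forall>d\<in>O_lower Ks p. lin (coextension Ks) (lin (coreference Ks) d) = d))"
proof -
  interpret morse_seq Ks K
    using assms by (rule morse_seq.intro)
  have chains: "finite c \<and> c \<subseteq> critical Ks" if "c \<in> crit_chains Ks p" for c
    using that finite_subset[OF _ finite_K] by (auto simp: crit_chains_def chains_def simplices_def last_Ks)
  show ?thesis
    unfolding O_upper_def O_lower_def
    using lin_iso_onto_image[of "crit_chains Ks p" "reference Ks" "extension Ks"]
      lin_iso_onto_image[of "crit_chains Ks p" "coreference Ks" "coextension Ks"]
      chains reference_extension coreference_coextension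
    by simp
qed

end
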